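(* Let $w,z\in\mathbb A$ with $w\ne0$ and $w,z$ relatively prime in $\mathbb A$, put $\theta=z/w$ and $W=\mathcal N(w)$, and suppose $c\ge1$ is such that $c^{-1}\sqrt W\le|\sigma_i(w)|\le c\sqrt W$ for $i=1,2$. Then there is a constant $c'>0$ depending only on $q$, $d$ and $c$ such that for every $k\in\mathbb A$ with $0<\mathcal N(k)<W$, $$\max\{\|\Re(k\theta)\|,\ \|\Im(k\theta)\|\}\ge c'\,W^{-1/2}.$$
   Context: $q$ is an odd prime power, $d\in\mathbb{F}_q[T]$ monic, square-free, of even degree, $\sqrt d\in k_\infty=\mathbb{F}_q((1/T))$ a fixed square root, $|\cdot|$ the absolute value on $k_\infty$ with $|\sum_{i\le n}a_iT^i|=q^n$ ($a_n\ne0$). $K=\mathbb{F}_q(T)(\sqrt d)$, $\mathbb A=\mathbb{F}_q[T][\sqrt d]$, $\sigma_1(a+b\sqrt d)=a+b\sqrt d$, $\sigma_2(a+b\sqrt d)=a-b\sqrt d$ for $a,b\in k$, $\mathcal N(w)=|\sigma_1(w)\sigma_2(w)|$. For $f=a+b\sqrt d\in K$ with $a,b\in k$: $\Re(f)=a$, $\Im(f)=b$. For $x\in k_\infty$, $\|x\|=\inf_{r\in\mathbb{F}_q[T]}|x-r|$ (the absolute value of the fractional part of $x$). *)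

theory Defs
  imports Complex_Main "HOL-Computational_Algebra.Polynomial"
    "HOL-Computational_Algebra.Formal_Laurent_Series"
    "HOL-Computational_Algebra.Squarefree"
begin

text \<open>k_infinity = F_q((1/T)) is modelled as Laurent series in the variable u = 1/T.
  A polynomial p(T) is embedded by substituting T := u^(-1).\<close>
definition emb :: "'a::field poly \<Rightarrow> 'a fls" where
  "emb p = poly (map_poly fls_const p) fls_X_inv"

text \<open>|x| = q^n for x = a_n T^n + lower terms, |0| = 0.\<close>
definition absv :: "'a::{finite,field} fls \<Rightarrow> real" where
  "absv x = (if x = 0 then 0 else real (card (UNIV :: 'a set)) powr (- real_of_int (fls_subdegree x)))"

definition fracnorm :: "'a::{finite,field} fls \<Rightarrow> real" where
  "fracnorm x = Inf ((\<lambda>r. absv (x - emb r)) ` UNIV)"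

text \<open>Arithmetic of R[sqrt D]: the pair (a,b) stands for a + b sqrt D.\<close>
definition qmul :: "'b::comm_ring_1 \<Rightarrow> 'b \<times> 'b \<Rightarrow> 'b \<times> 'b \<Rightarrow> 'b \<times> 'b" where
  "qmul D x y = (fst x * fst y + D * snd x * snd y, fst x * snd y + snd x * fst y)"

definition qdiv :: "'b::field \<Rightarrow> 'b \<times> 'b \<Rightarrow> 'b \<times> 'b \<Rightarrow> 'b \<times> 'b" where
  "qdiv D x y = (let n = fst y ^ 2 - D * snd y ^ 2;
                     p = qmul D x (fst y, - snd y) in (fst p / n, snd p / n))"

text \<open>Embedding of A = F_q[T][sqrt d] (pairs of polynomials) into K, coordinates in k_infinity.\<close>
definition embA :: "'a::field poly \<times> 'a poly \<Rightarrow> 'a fls \<times> 'a fls" where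
  "embA w = (emb (fst w), emb (snd w))"

text \<open>The two embeddings sigma_1, sigma_2 : K \<rightarrow> k_infinity, given the fixed square root s of d.\<close>
definition sigma1 :: "'a::field fls \<Rightarrow> 'a fls \<times> 'a fls \<Rightarrow> 'a fls" where
  "sigma1 s x = fst x + snd x * s"

definition sigma2 :: "'a::field fls \<Rightarrow> 'a fls \<times> 'a fls \<Rightarrow> 'a fls" where
  "sigma2 s x = fst x - snd x * s"

definition normN :: "'a::{finite,field} fls \<Rightarrow> 'a fls \<times> 'a fls \<Rightarrow> real" where
  "normN s x = absv (sigma1 s x * sigma2 s x)"

text \<open>w, z relatively prime in A: they generate the unit ideal.\<close>
definition coprimeA :: "'a::field poly \<Rightarrow> 'a poly \<times> 'a poly \<Rightarrow> 'a poly \<times> 'a poly \<Rightarrow> bool" where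
  "coprimeA d w z \<longleftrightarrow> (\<exists>x y. fst (qmul d x w) + fst (qmul d y z) = 1 \<and> snd (qmul d x w) + snd (qmul d y z) = 0)"

end

theory Submission
  imports Defs "HOL-Computational_Algebra.Polynomial_Factorial" "HOL-Library.Product_Plus"
begin

text \<open>Suppose both coordinates of \<open>k\<theta>\<close> lie within \<open>\<delta>\<close> of polynomials, i.e.
  \<open>k\<theta> = m + \<epsilon>\<close> with \<open>m \<in> A\<close> and both coordinates of \<open>\<epsilon>\<close> smaller than \<open>\<delta>\<close>.
  Then \<open>e = kz - mw \<in> A\<close> has conjugates \<open>\<sigma>\<^sub>i(e) = \<sigma>\<^sub>i(\<epsilon>) \<sigma>\<^sub>i(w)\<close> of absolute value
  below \<open>\<delta> max(1, |\<surd>d|) c \<surd>W\<close>, which is \<open>1\<close> for \<open>\<delta> = c' W^(-1/2)\<close> with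
  \<open>c' = 1 / (c max(1, |\<surd>d|))\<close>. So \<open>N(e) < 1\<close>; but as \<open>d\<close> is not a square, the norm of a
  nonzero element of \<open>A\<close> is the absolute value of a nonzero polynomial, hence \<open>\<ge> 1\<close>.
  Thus \<open>kz = mw\<close>, so \<open>w\<close> divides \<open>k\<close> by coprimality and \<open>N(k) \<ge> W\<close>.
  Only the upper bounds on \<open>|\<sigma>\<^sub>i(w)|\<close> are needed, and none of the hypotheses on \<open>q\<close>
  or on the leading coefficient and parity of degree of \<open>d\<close>.\<close>

lemma emb_pCons: "emb (pCons a p) = fls_const a + fls_X_inv * emb p"
  by (simp add: emb_def map_poly_pCons)

lemma emb_0 [simp]: "emb 0 = 0"
  by (simp add: emb_def)

lemma emb_add: "emb (p + q) = emb p + emb q"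
proof (induction p q rule: poly_induct2)
  case (pCons a p b q)
  then show ?case
    by (simp add: emb_pCons algebra_simps flip: fls_plus_const)
qed simp

lemma emb_diff: "emb (p - q) = emb p - emb q"
  using emb_add[of "p - q" q] by (simp add: eq_diff_eq)

lemma emb_smult: "emb (smult a p) = fls_const a * emb p"
  by (induction p) (simp_all add: emb_pCons algebra_simps)

lemma emb_mult: "emb (p * q) = emb p * emb q"
  by (induction p) (simp_all add: emb_pCons emb_add emb_smult algebra_simps)

lemma fls_nth_emb: "fls_nth (emb p) n = (if n \<le> 0 then coeff p (nat (- n)) else 0)"
proof (induction p arbitrary: n)
  case (pCons a p)
  then show ?case
    by (cases "n < 0")
      (auto simp: emb_pCons fls_X_inv_times_conv_shift coeff_pCons split: nat.split
        intro!: arg_cong[where f = "coeff p"])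
qed simp

lemma emb_eq_0_iff [simp]: "emb p = 0 \<longleftrightarrow> p = 0"
proof
  assume "emb p = 0"
  then have "coeff p n = 0" for n
    using fls_nth_emb[of p "- int n"] by simp
  then show "p = 0"
    by (simp add: poly_eqI)
qed simp

lemma card_UNIV_field_ge_2: "2 \<le> real (card (UNIV :: 'a::{finite,field} set))"
proof -
  have "card {0::'a, 1} \<le> card (UNIV :: 'a set)"
    by (intro card_mono) auto
  then show ?thesis
    by simp
qed

lemma absv_0 [simp]: "absv 0 = 0"
  by (simp add: absv_def)

lemma absv_nonneg: "0 \<le> absv x"
  by (simp add: absv_def)

lemma absv_pos: "x \<noteq> 0 \<Longrightarrow> 0 < absv x"
  using card_UNIV_field_ge_2 by (simp add: absv_def)

lemma absv_mult: "absv (x * y) = absv x * absv y"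
  using card_UNIV_field_ge_2 by (simp add: absv_def algebra_simps flip: powr_add)

lemma absv_uminus [simp]: "absv (- x) = absv x"
  by (simp add: absv_def)

lemma absv_le_iff_subdegree:
  fixes x y :: "'a::{finite,field} fls"
  assumes "x \<noteq> 0" "y \<noteq> 0"
  shows "absv x \<le> absv y \<longleftrightarrow> fls_subdegree y \<le> fls_subdegree x"
proof -
  have "1 < real (card (UNIV :: 'a set))"
    using card_UNIV_field_ge_2[where 'a='a] by linarith
  from powr_le_cancel_iff[OF this] show ?thesis
    using assms by (simp add: absv_def)
qed

lemma absv_add_le_max: "absv (x + y) \<le> max (absv x) (absv y)"
proof (cases "x = 0 \<or> y = 0 \<or> x + y = 0")
  case True
  then show ?thesis
    by (auto simp: absv_nonneg max.coboundedI1)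
next
  case False
  then have "min (fls_subdegree x) (fls_subdegree y) \<le> fls_subdegree (x + y)"
    by (intro fls_plus_subdegree) auto
  then have "absv (x + y) \<le> absv x \<or> absv (x + y) \<le> absv y"
    using False by (auto simp: absv_le_iff_subdegree min_def split: if_splits)
  then show ?thesis
    by linarith
qed

lemma absv_emb_ge_1:
  fixes p :: "'a::{finite,field} poly"
  assumes "p \<noteq> 0"
  shows "1 \<le> absv (emb p)"
proof -
  have "fls_subdegree (emb p) \<le> - int (degree p)"
    using assms by (intro fls_subdegree_leI) (simp add: fls_nth_emb)
  then have "absv (1 :: 'a fls) \<le> absv (emb p)"
    using assms by (simp add: absv_le_iff_subdegree)
  then show ?thesis
    by (simp add: absv_def)
qed

lemma fracnorm_less_imp_approx:
  assumes "fracnorm x < e"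
  obtains r where "absv (x - emb r) < e"
  using assms cInf_lessD[of "range (\<lambda>r. absv (x - emb r))" e] by (auto simp: fracnorm_def)

lemma irreducible_divisor_exists:
  fixes p :: "'a::field poly"
  assumes "0 < degree p"
  shows "\<exists>q. irreducible q \<and> q dvd p"
  using assms
proof (induction "degree p" arbitrary: p rule: less_induct)
  case less
  show ?case
  proof (cases "irreducible p")
    case False
    have "p \<noteq> 0"
      using less.prems by auto
    then have "\<not> is_unit p"
      using less.prems by (simp add: is_unit_iff_degree)
    with False \<open>p \<noteq> 0\<close> obtain a b where ab: "p = a * b" "\<not> is_unit a" "\<not> is_unit b"
      unfolding irreducible_def by blast
    with \<open>p \<noteq> 0\<close> have "0 < degree a" "0 < degree b"
      by (auto simp: is_unit_iff_degree)
    moreover have "degree p = degree a + degree b"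
      using \<open>p \<noteq> 0\<close> ab(1) by (simp add: degree_mult_eq)
    ultimately obtain q where "irreducible q" "q dvd a"
      using less.hyps[of a] by auto
    with ab(1) show ?thesis
      by auto
  qed auto
qed

lemma square_eq_squarefree_mult_square_imp_0:
  fixes d a b :: "'a::field poly"
  assumes "squarefree d" "0 < degree d" "a ^ 2 = d * b ^ 2"
  shows "b = 0"
  using assms(3)
proof (induction "degree b" arbitrary: a b rule: less_induct)
  case less
  show ?case
  proof (rule ccontr)
    assume "b \<noteq> 0"
    obtain p where "irreducible p" and "p dvd d"
      using irreducible_divisor_exists[OF assms(2)] by blast
    then have p: "prime_elem p" "p \<noteq> 0" "0 < degree p"
      using field_poly_irreducible_imp_prime by (auto simp: irreducible_def is_unit_iff_degree)
    obtain d' where d': "d = p * d'"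
      using \<open>p dvd d\<close> by blast
    have "\<not> p dvd d'"
    proof
      assume "p dvd d'"
      then have "p ^ 2 dvd d"
        by (simp add: d' power2_eq_square)
      then show False
        using assms(1) p by (auto simp: squarefree_def prime_elem_not_unit)
    qed
    have "p dvd a ^ 2"
      using less.prems by (simp add: d')
    then obtain a' where a': "a = p * a'"
      using p(1) prime_elem_dvd_power by blast
    have "p * (p * a' ^ 2) = p * (d' * b ^ 2)"
      using less.prems unfolding a' d' by algebra
    then have "p * a' ^ 2 = d' * b ^ 2"
      using p(2) by (metis mult_left_cancel)
    then have "p dvd b ^ 2"
      using \<open>\<not> p dvd d'\<close> p(1) by (metis dvd_triv_left prime_elem_dvd_mult_iff)
    then obtain b' where b': "b = p * b'"
      using p(1) prime_elem_dvd_power by blast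
    have "a' ^ 2 = d * b' ^ 2"
      using less.prems p(2) by (simp add: a' b' power_mult_distrib)
    moreover have "degree b' < degree b"
      using \<open>b \<noteq> 0\<close> p by (simp add: b' degree_mult_eq)
    ultimately have "b' = 0"
      using less.hyps by blast
    with \<open>b \<noteq> 0\<close> show False
      by (simp add: b')
  qed
qed

lemma coprimeA_dvd:
  assumes "coprimeA d w z" "qmul d k z = qmul d m w"
  shows "\<exists>u. k = qmul d u w"
proof -
  obtain x y where xy: "qmul d x w + qmul d y z = (1, 0)"
    using assms(1) by (auto simp: coprimeA_def prod_eq_iff)
  have "k = qmul d k (qmul d x w + qmul d y z)"
    unfolding xy by (simp add: qmul_def)
  also have "\<dots> = qmul d (qmul d k x) w + qmul d y (qmul d k z)"
    by (simp add: qmul_def algebra_simps)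
  also have "\<dots> = qmul d (qmul d k x + qmul d y m) w"
    unfolding assms(2) by (simp add: qmul_def algebra_simps)
  finally show ?thesis
    by blast
qed

lemma embA_qmul: "embA (qmul d x y) = qmul (emb d) (embA x) (embA y)"
  by (simp add: embA_def qmul_def emb_add emb_mult)

lemma embA_diff: "embA (x - y) = embA x - embA y"
  by (simp add: embA_def emb_diff)

lemma sigma2_eq_sigma1_neg: "sigma2 s = sigma1 (- s)"
  by (simp add: fun_eq_iff sigma1_def sigma2_def)

lemma sigma1_diff: "sigma1 s (x - y) = sigma1 s x - sigma1 s y"
  by (simp add: sigma1_def algebra_simps)

lemma sigma1_qmul: "sigma1 s (qmul (s * s) x y) = sigma1 s x * sigma1 s y"
  by (simp add: sigma1_def qmul_def algebra_simps)

text \<open>\<open>qdiv\<close> divides by the norm \<open>\<sigma>\<^sub>1(w) \<sigma>\<^sub>2(w)\<close>; if \<open>\<sigma>\<^sub>1(w) = 0\<close> both sides are \<open>0\<close>.\<close>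

lemma sigma1_qdiv:
  assumes "sigma1 (- s) w \<noteq> 0"
  shows "sigma1 s (qdiv (s * s) z w) = sigma1 s z / sigma1 s w"
proof -
  have "sigma1 s (qdiv (s * s) z w) = sigma1 s z * sigma1 (- s) w / (sigma1 s w * sigma1 (- s) w)"
    by (simp add: qdiv_def Let_def qmul_def sigma1_def power2_eq_square algebra_simps flip: add_divide_distrib)
  then show ?thesis
    using assms by simp
qed

lemma absv_sigma1_le: "absv (sigma1 s x) \<le> max (absv (fst x)) (absv (snd x)) * max 1 (absv s)"
proof -
  define A where "A = max (absv (fst x)) (absv (snd x))"
  have "0 \<le> A"
    by (simp add: A_def absv_nonneg le_max_iff_disj)
  then have "absv (fst x) \<le> A * max 1 (absv s)"
    using mult_left_mono[of 1 "max 1 (absv s)" A] by (simp add: A_def)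
  moreover have "absv (snd x) * absv s \<le> A * max 1 (absv s)"
    using \<open>0 \<le> A\<close> by (intro mult_mono) (auto simp: A_def absv_nonneg)
  moreover have "absv (sigma1 s x) \<le> max (absv (fst x)) (absv (snd x) * absv s)"
    unfolding sigma1_def absv_mult[symmetric] by (rule absv_add_le_max)
  ultimately show ?thesis
    by (simp add: A_def)
qed

lemma normN_eq: "normN s x = absv (sigma1 s x) * absv (sigma1 (- s) x)"
  by (simp add: normN_def sigma2_eq_sigma1_neg absv_mult)

lemma normN_embA_qmul:
  assumes "s * s = emb d"
  shows "normN s (embA (qmul d x y)) = normN s (embA x) * normN s (embA y)"
proof -
  show ?thesis
    unfolding normN_eq embA_qmul assms[symmetric] using sigma1_qmul[of "- s"]
    by (simp add: sigma1_qmul absv_mult)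
qed

lemma normN_embA_ge_1:
  fixes d :: "'a::{finite,field} poly"
  assumes "s * s = emb d" "squarefree d" "0 < degree d" "x \<noteq> 0"
  shows "1 \<le> normN s (embA x)"
proof -
  have "normN s (embA x) = absv (emb (fst x ^ 2 - d * snd x ^ 2))"
    by (simp add: normN_def sigma1_def sigma2_def embA_def emb_diff emb_mult power2_eq_square
        assms(1)[symmetric] algebra_simps)
  moreover have "fst x ^ 2 - d * snd x ^ 2 \<noteq> 0"
  proof
    assume "fst x ^ 2 - d * snd x ^ 2 = 0"
    then have "fst x ^ 2 = d * snd x ^ 2"
      by simp
    moreover from this have "snd x = 0"
      using square_eq_squarefree_mult_square_imp_0 assms(2,3) by blast
    ultimately show False
      using assms(4) by (simp add: prod_eq_iff)
  qed
  ultimately show ?thesis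
    by (simp add: absv_emb_ge_1)
qed

lemma absv_sigma1_remainder_less_1:
  fixes d :: "'a::{finite,field} poly"
  assumes s: "s * s = emb d"
    and w: "sigma1 s (embA w) \<noteq> 0" "sigma1 (- s) (embA w) \<noteq> 0" "absv (sigma1 s (embA w)) \<le> B"
    and approx: "absv (fst (qmul (emb d) (embA k) (qdiv (emb d) (embA z) (embA w))) - emb (fst m)) < \<delta>"
      "absv (snd (qmul (emb d) (embA k) (qdiv (emb d) (embA z) (embA w))) - emb (snd m)) < \<delta>"
    and \<delta>: "\<delta> * max 1 (absv s) * B \<le> 1"
  shows "absv (sigma1 s (embA (qmul d k z - qmul d m w))) < 1"
proof -
  define t where "t = qmul (emb d) (embA k) (qdiv (emb d) (embA z) (embA w))"
  define M where "M = max 1 (absv s)"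
  have "sigma1 s t * sigma1 s (embA w) = sigma1 s (embA k) * sigma1 s (embA z)"
    using w by (simp add: t_def s[symmetric] sigma1_qmul sigma1_qdiv)
  then have factor: "sigma1 s (embA (qmul d k z - qmul d m w)) = sigma1 s (t - embA m) * sigma1 s (embA w)"
    by (simp add: embA_diff embA_qmul s[symmetric] sigma1_diff sigma1_qmul algebra_simps)
  have "max (absv (fst (t - embA m))) (absv (snd (t - embA m))) < \<delta>"
    using approx by (simp add: t_def embA_def)
  then have "max (absv (fst (t - embA m))) (absv (snd (t - embA m))) * M < \<delta> * M"
    by (rule mult_strict_right_mono) (simp add: M_def)
  then have "absv (sigma1 s (t - embA m)) < \<delta> * M"
    using absv_sigma1_le[of s "t - embA m"] by (simp add: M_def)
  moreover have "0 < absv (sigma1 s (embA w))"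
    using w(1) by (rule absv_pos)
  ultimately have "absv (sigma1 s (embA (qmul d k z - qmul d m w))) < \<delta> * M * absv (sigma1 s (embA w))"
    unfolding factor absv_mult by (rule mult_strict_right_mono)
  also have "\<dots> \<le> \<delta> * M * B"
    using le_less_trans[OF absv_nonneg approx(1)] w(3) by (auto simp: M_def intro!: mult_left_mono)
  finally show ?thesis
    using \<delta> by (simp add: M_def)
qed

lemma small_fracnorms_imp_multiple:
  fixes d :: "'a::{finite,field} poly"
  assumes d: "s * s = emb d" "squarefree d" "0 < degree d"
    and "coprimeA d w z"
    and w: "normN s (embA w) \<noteq> 0"
      "absv (sigma1 s (embA w)) \<le> B" "absv (sigma2 s (embA w)) \<le> B"
    and frac: "fracnorm (fst (qmul (emb d) (embA k) (qdiv (emb d) (embA z) (embA w)))) < \<delta>"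
      "fracnorm (snd (qmul (emb d) (embA k) (qdiv (emb d) (embA z) (embA w)))) < \<delta>"
    and \<delta>: "\<delta> * max 1 (absv s) * B \<le> 1"
  shows "\<exists>u. k = qmul d u w"
proof -
  obtain r1 where r1: "absv (fst (qmul (emb d) (embA k) (qdiv (emb d) (embA z) (embA w))) - emb r1) < \<delta>"
    using frac(1) by (rule fracnorm_less_imp_approx)
  obtain r2 where r2: "absv (snd (qmul (emb d) (embA k) (qdiv (emb d) (embA z) (embA w))) - emb r2) < \<delta>"
    using frac(2) by (rule fracnorm_less_imp_approx)
  define e where "e = qmul d k z - qmul d (r1, r2) w"
  have nz: "sigma1 s (embA w) \<noteq> 0" "sigma1 (- s) (embA w) \<noteq> 0"
    using w(1) by (auto simp: normN_eq)
  have "absv (sigma1 s (embA e)) < 1"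
    unfolding e_def using d(1) nz w(2) r1 r2 \<delta> by (intro absv_sigma1_remainder_less_1) auto
  moreover have "absv (sigma1 (- s) (embA e)) < 1"
    unfolding e_def using d(1) nz w(3) r1 r2 \<delta>
    by (intro absv_sigma1_remainder_less_1) (auto simp: sigma2_eq_sigma1_neg)
  ultimately have "normN s (embA e) < 1"
    using mult_left_le[of "absv (sigma1 (- s) (embA e))" "absv (sigma1 s (embA e))"]
      absv_nonneg[of "sigma1 s (embA e)"] unfolding normN_eq by linarith
  then have "e = 0"
    using normN_embA_ge_1[OF d] by fastforce
  then show ?thesis
    using coprimeA_dvd[OF \<open>coprimeA d w z\<close>] by (simp add: e_def)
qed

lemma normN_embA_le_multiple:
  fixes d :: "'a::{finite,field} poly"
  assumes d: "s * s = emb d" "squarefree d" "0 < degree d"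
    and "k = qmul d u w" "0 < normN s (embA k)"
  shows "normN s (embA w) \<le> normN s (embA k)"
proof -
  have k: "normN s (embA k) = normN s (embA u) * normN s (embA w)"
    using normN_embA_qmul[OF d(1)] assms(4) by simp
  have "u \<noteq> 0"
    using assms(4,5) by (auto simp: qmul_def embA_def normN_def sigma1_def sigma2_def)
  then have "1 \<le> normN s (embA u)"
    by (rule normN_embA_ge_1[OF d])
  then show ?thesis
    using k assms(5) by (simp add: zero_less_mult_iff)
qed

lemma max_fracnorm_ge:
  fixes d :: "'a::{finite,field} poly"
  assumes d: "s * s = emb d" "squarefree d" "0 < degree d"
    and "1 \<le> c" and "coprimeA d w z"
    and bounds: "absv (sigma1 s (embA w)) \<le> c * sqrt (normN s (embA w))"
      "absv (sigma2 s (embA w)) \<le> c * sqrt (normN s (embA w))"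
    and k: "0 < normN s (embA k)" "normN s (embA k) < normN s (embA w)"
  shows "inverse (c * max 1 (absv s)) * normN s (embA w) powr (-1/2) \<le>
      max (fracnorm (fst (qmul (emb d) (embA k) (qdiv (emb d) (embA z) (embA w)))))
          (fracnorm (snd (qmul (emb d) (embA k) (qdiv (emb d) (embA z) (embA w)))))"
proof (rule ccontr)
  define W where "W = normN s (embA w)"
  define \<delta> where "\<delta> = inverse (c * max 1 (absv s)) * W powr (-1/2)"
  assume "\<not> ?thesis"
  then have frac: "fracnorm (fst (qmul (emb d) (embA k) (qdiv (emb d) (embA z) (embA w)))) < \<delta>"
      "fracnorm (snd (qmul (emb d) (embA k) (qdiv (emb d) (embA z) (embA w)))) < \<delta>"
    by (simp_all add: \<delta>_def W_def)
  have "0 < W"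
    using k by (simp add: W_def)
  then have "\<delta> * max 1 (absv s) * (c * sqrt W) = 1"
    using \<open>1 \<le> c\<close> by (simp add: \<delta>_def powr_minus powr_half_sqrt field_simps)
  then obtain u where "k = qmul d u w"
    using small_fracnorms_imp_multiple[OF d \<open>coprimeA d w z\<close> _ bounds[folded W_def] frac] \<open>0 < W\<close>
    by (auto simp: W_def)
  then show False
    using normN_embA_le_multiple[OF d] k by fastforce
qed

theorem mainTheorem11:
  fixes d :: "'a::{finite,field} poly" and s :: "'a fls" and c :: real
  assumes "odd (card (UNIV :: 'a set))"
    and "lead_coeff d = 1" and "squarefree d" and "even (degree d)" and "degree d > 0"
    and "s * s = emb d"
    and "c \<ge> 1"
  shows "\<exists>c'>0. \<forall>w z :: 'a poly \<times> 'a poly.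
           w \<noteq> (0, 0) \<and> coprimeA d w z \<and>
           inverse c * sqrt (normN s (embA w)) \<le> absv (sigma1 s (embA w)) \<and>
           absv (sigma1 s (embA w)) \<le> c * sqrt (normN s (embA w)) \<and>
           inverse c * sqrt (normN s (embA w)) \<le> absv (sigma2 s (embA w)) \<and>
           absv (sigma2 s (embA w)) \<le> c * sqrt (normN s (embA w)) \<longrightarrow>
           (\<forall>k :: 'a poly \<times> 'a poly.
              0 < normN s (embA k) \<and> normN s (embA k) < normN s (embA w) \<longrightarrow>
              max (fracnorm (fst (qmul (emb d) (embA k) (qdiv (emb d) (embA z) (embA w)))))
                  (fracnorm (snd (qmul (emb d) (embA k) (qdiv (emb d) (embA z) (embA w)))))
                \<ge> c' * normN s (embA w) powr (-1/2))"
proof -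
  have "0 < inverse (c * max 1 (absv s))"
    using \<open>c \<ge> 1\<close> by simp
  with max_fracnorm_ge[OF assms(6,3,5,7)] show ?thesis
    by blast
qed

end
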